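(* Let $x>0$ and $p\in\mathbb{R}$. (i) If $0\le p\le \frac12$, then $\hat{G}_p(x,1)\ge K(x)^{-p(1-p)}W_p(x,1)$. (ii) If $p\le 0$ or $p\ge 1$, then $\hat{G}_p(x,1)\le K(x)^{-p(1-p)}W_p(x,1)$.
   Context: For $x>0$, $x\neq1$ and $p\neq 0$: $\hat{G}_p(x,1)=\frac{p\,x^{p/2}(x-1)}{x^p-1}$, with $\hat G_p(1,1)=1$ and $\hat{G}_0(x,1)=\frac{x-1}{\log x}$ (limiting value). $K(x)=\frac{(x+1)^2}{4x}$. The Wigner--Yanase--Dyson function for $p\in\mathbb{R}\setminus\{0,1\}$, $x\ne1$ is $W_p(x,1)=\frac{p(1-p)(x-1)^2}{(x^p-1)(x^{1-p}-1)}$, with $W_p(1,1)=1$ and $W_0(x,1)=W_1(x,1)=\frac{x-1}{\log x}$ (limiting value). *)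

theory Defs
  imports "HOL-Analysis.Analysis"
begin

definition Ghat :: "real \<Rightarrow> real \<Rightarrow> real" where
  "Ghat p x = (if x = 1 then 1
     else if p = 0 then (x - 1) / ln x
     else p * x powr (p / 2) * (x - 1) / (x powr p - 1))"

definition K :: "real \<Rightarrow> real" where
  "K x = (x + 1)^2 / (4 * x)"

definition W :: "real \<Rightarrow> real \<Rightarrow> real" where
  "W p x = (if x = 1 then 1
     else if p = 0 \<or> p = 1 then (x - 1) / ln x
     else p * (1 - p) * (x - 1)^2 / ((x powr p - 1) * (x powr (1 - p) - 1)))"

end

theory Submission
  imports Defs
begin

text \<open>
  Put \<open>x = exp (2 * t)\<close> and \<open>B q t = sinh (q * t) / (q * sinh t)\<close>. Then
  \<open>Ghat p x = exp t / B p t\<close>, \<open>W p x = exp t / (B p t * B (1 - p) t)\<close> and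
  \<open>K x = (cosh t)\<^sup>2\<close>, so with \<open>q = 1 - p\<close> both inequalities compare \<open>B q t\<close> with
  \<open>cosh t powr (2 * q * (q - 1))\<close>. For fixed \<open>t\<close>, the function
  \<open>q \<mapsto> ln (B q t) - 2 * q * (q - 1) * ln (cosh t)\<close> is concave on \<open>[1/2, \<infinity>)\<close>,
  nonnegative at \<open>q = 1/2\<close> (because \<open>(cosh (t / 2))\<^sup>2 \<le> cosh t\<close>) and zero at \<open>q = 1\<close>;
  hence it is nonnegative on \<open>[1/2, 1]\<close> and nonpositive on \<open>[1, \<infinity>)\<close>.
  Negative \<open>q\<close> reduce to positive ones because \<open>B q t\<close> is even in \<open>q\<close>.
\<close>

lemma concave_on_nonneg_between:
  fixes f :: "real \<Rightarrow> real"
  assumes "concave_on A f" "a \<in> A" "b \<in> A" "0 \<le> f a" "0 \<le> f b" "a \<le> q" "q \<le> b"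
  shows "0 \<le> f q"
proof (cases "a = b")
  case True
  then show ?thesis using assms by simp
next
  case False
  then have "0 < b - a"
    using assms(6,7) by simp
  define t where "t = (q - a) / (b - a)"
  have t: "0 \<le> t" "t \<le> 1"
    using \<open>0 < b - a\<close> assms(6,7) by (auto simp: t_def field_simps)
  have "(1 - t) *\<^sub>R a + t *\<^sub>R b = a + t * (b - a)"
    by (simp add: algebra_simps)
  also have "\<dots> = q"
    using \<open>0 < b - a\<close> by (simp add: t_def)
  finally have "(1 - t) *\<^sub>R a + t *\<^sub>R b = q" .
  then have "(1 - t) * f a + t * f b \<le> f q"
    using concave_onD[OF assms(1) t assms(2,3)] by simp
  moreover have "0 \<le> (1 - t) * f a + t * f b"
    using t assms(4,5) by simp
  ultimately show ?thesis by linarith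
qed

lemma concave_on_nonpos_beyond:
  fixes f :: "real \<Rightarrow> real"
  assumes "concave_on A f" "a \<in> A" "q \<in> A" "0 \<le> f a" "f b \<le> 0" "a < b" "b \<le> q"
  shows "f q \<le> 0"
proof -
  have "0 < q - a"
    using assms(6,7) by simp
  define t where "t = (b - a) / (q - a)"
  have t: "0 < t" "t \<le> 1"
    using \<open>0 < q - a\<close> assms(6,7) by (auto simp: t_def field_simps)
  have "(1 - t) *\<^sub>R a + t *\<^sub>R q = a + t * (q - a)"
    by (simp add: algebra_simps)
  also have "\<dots> = b"
    using \<open>0 < q - a\<close> by (simp add: t_def)
  finally have "(1 - t) *\<^sub>R a + t *\<^sub>R q = b" .
  then have "(1 - t) * f a + t * f q \<le> f b"
    using concave_onD[OF assms(1) _ _ assms(2,3)] t by (metis less_eq_real_def)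
  then have "t * f q \<le> 0"
    using t assms(4,5) by (smt (verit) mult_nonneg_nonneg)
  then show ?thesis
    using t by (simp add: mult_le_0_iff)
qed

lemma abs_le_abs_sinh: "\<bar>u::real\<bar> \<le> \<bar>sinh u\<bar>"
  using real_le_abs_sinh[of u] by (simp add: sinh_field_def exp_minus)

lemma one_le_sinh_div_self: "(u::real) \<noteq> 0 \<Longrightarrow> 1 \<le> sinh u / u"
  using abs_le_abs_sinh[of u] by (cases "u > 0") (auto simp: field_simps)

lemma sinh_le_mult_cosh:
  assumes "0 \<le> (u::real)"
  shows "sinh u \<le> u * cosh u"
proof -
  have "(\<lambda>v. v * cosh v - sinh v) 0 \<le> (\<lambda>v. v * cosh v - sinh v) u"
    by (rule DERIV_nonneg_imp_nondecreasing[OF assms])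
       (auto intro!: exI derivative_eq_intros)
  then show ?thesis by simp
qed

lemma convex_on_sinh: "convex_on {0..} (sinh :: real \<Rightarrow> real)"
  by (rule f''_ge0_imp_convex[where f' = cosh and f'' = sinh])
     (auto intro!: derivative_eq_intros)

lemma sinh_mult_le:
  assumes "0 \<le> r" "r \<le> 1" "0 \<le> (s::real)"
  shows "sinh (r * s) \<le> r * sinh s"
  using convex_onD[OF convex_on_sinh, of r 0 s] assms by simp

lemma cosh_ge_1_plus_half_sq: "1 + (u::real)\<^sup>2 / 2 \<le> cosh u"
proof -
  have "cosh u = 1 + 2 * (sinh (u/2))\<^sup>2"
    using cosh_double_cosh[of "u/2"] by (simp add: cosh_square_eq)
  moreover have "(u/2)\<^sup>2 \<le> (sinh (u/2))\<^sup>2"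
    using abs_le_abs_sinh[of "u/2"] by (metis power2_abs power_mono abs_ge_zero)
  ultimately show ?thesis by (simp add: power_divide)
qed

lemma cosh_half_sq_le: "(cosh ((t::real) / 2))\<^sup>2 \<le> cosh t"
  using cosh_double_cosh[of "t/2"] cosh_real_ge_1[of "t/2"] power_mono[of 1 "cosh (t/2)" 2]
  by simp

lemma min_sq_le_four_ln_cosh: "min ((u::real)\<^sup>2) 4 \<le> 4 * ln (cosh u)"
proof (cases "u\<^sup>2 \<le> 4")
  case True
  have "exp (u\<^sup>2/4) \<le> 1 + u\<^sup>2/4 + (u\<^sup>2/4)\<^sup>2"
    using True by (intro exp_bound) auto
  also have "\<dots> \<le> 1 + u\<^sup>2/2"
    using True mult_right_mono[OF True, of "u\<^sup>2"] by (simp add: power2_eq_square)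
  also have "\<dots> \<le> cosh u" by (rule cosh_ge_1_plus_half_sq)
  finally have "u\<^sup>2/4 \<le> ln (cosh u)"
    by (subst ln_ge_iff) auto
  then show ?thesis by simp
next
  case False
  have "exp 1 \<le> cosh u"
    using exp_le cosh_ge_1_plus_half_sq[of u] False by linarith
  then have "1 \<le> ln (cosh u)"
    by (subst ln_ge_iff) auto
  then show ?thesis by simp
qed

lemma inverse_sq_minus_inverse_sinh_sq_le_one:
  assumes "(u::real) > 0"
  shows "1 / u\<^sup>2 - 1 / (sinh u)\<^sup>2 \<le> 1"
proof -
  have "(sinh u)\<^sup>2 \<le> (u * cosh u)\<^sup>2"
    using sinh_le_mult_cosh[of u] assms by (intro power_mono) auto
  then have "(sinh u)\<^sup>2 - u\<^sup>2 \<le> u\<^sup>2 * (sinh u)\<^sup>2"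
    by (simp add: power_mult_distrib cosh_square_eq algebra_simps)
  then show ?thesis
    using assms by (simp add: field_simps)
qed

lemma exp_double_minus_one: "exp (2 * y) - 1 = 2 * exp y * sinh (y::real)"
proof -
  have "exp (2 * y) = exp y * exp y"
    by (metis exp_add mult_2)
  then show ?thesis
    by (simp add: sinh_field_def exp_minus field_simps)
qed

lemma exp_double_plus_one: "exp (2 * y) + 1 = 2 * exp y * cosh (y::real)"
proof -
  have "exp (2 * y) = exp y * exp y"
    by (metis exp_add mult_2)
  then show ?thesis
    by (simp add: cosh_field_def exp_minus field_simps)
qed

lemma exp_double_powr_minus_one:
  "exp (2 * t) powr a - 1 = 2 * exp (a * t) * sinh (a * (t::real))"
  using exp_double_minus_one[of "a * t"] by (simp add: powr_def mult_ac)

definition sinh_ratio :: "real \<Rightarrow> real \<Rightarrow> real" where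
  "sinh_ratio q t = sinh (q * t) / (q * sinh t)"

lemma sinh_ratio_pos:
  assumes "q \<noteq> 0" "t \<noteq> 0"
  shows "sinh_ratio q t > 0"
  using assms by (auto simp: sinh_ratio_def zero_less_divide_iff zero_less_mult_iff mult_less_0_iff)

lemma sinh_ratio_minus_left [simp]: "sinh_ratio (- q) t = sinh_ratio q t"
  by (simp add: sinh_ratio_def)

lemma sinh_ratio_abs_right [simp]: "sinh_ratio q \<bar>t\<bar> = sinh_ratio q t"
  by (cases "t \<ge> 0") (simp_all add: sinh_ratio_def)

lemma sinh_ratio_one [simp]: "t \<noteq> 0 \<Longrightarrow> sinh_ratio 1 t = 1"
  by (simp add: sinh_ratio_def)

lemma sinh_ratio_half: "t \<noteq> 0 \<Longrightarrow> sinh_ratio (1/2) t = 1 / cosh (t/2)"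
  using sinh_double[of "t/2"] by (simp add: sinh_ratio_def)

lemma K_exp_double: "K (exp (2 * t)) = (cosh (t::real))\<^sup>2"
proof -
  have "exp (2 * t) = exp t * exp t"
    by (metis exp_add mult_2)
  then show ?thesis
    unfolding K_def exp_double_plus_one by (simp add: field_simps power2_eq_square)
qed

lemma Ghat_exp_double:
  assumes "t \<noteq> 0" "p \<noteq> 0"
  shows "Ghat p (exp (2 * t)) = exp t / sinh_ratio p t"
proof -
  define x where "x = exp (2 * t)"
  have "x \<noteq> 1"
    using assms by (simp add: x_def)
  moreover have "x powr (p / 2) = exp (p * t)"
    by (simp add: x_def powr_def)
  moreover have "x - 1 = 2 * exp t * sinh t" "x powr p - 1 = 2 * exp (p * t) * sinh (p * t)"
    by (simp_all add: x_def exp_double_minus_one exp_double_powr_minus_one)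
  ultimately have "Ghat p x = p * exp (p * t) * (2 * exp t * sinh t) / (2 * exp (p * t) * sinh (p * t))"
    using assms by (simp add: Ghat_def)
  then show ?thesis
    using assms by (simp add: x_def sinh_ratio_def field_simps)
qed

lemma W_exp_double:
  assumes "t \<noteq> 0" "p \<noteq> 0" "p \<noteq> 1"
  shows "W p (exp (2 * t)) = exp t / (sinh_ratio p t * sinh_ratio (1 - p) t)"
proof -
  define x where "x = exp (2 * t)"
  have "x \<noteq> 1"
    using assms by (simp add: x_def)
  moreover have "x - 1 = 2 * exp t * sinh t" "x powr a - 1 = 2 * exp (a * t) * sinh (a * t)" for a
    by (simp_all add: x_def exp_double_minus_one exp_double_powr_minus_one)
  ultimately have "W p x = p * (1 - p) * (2 * exp t * sinh t)\<^sup>2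
      / ((2 * exp (p * t) * sinh (p * t)) * (2 * exp ((1 - p) * t) * sinh ((1 - p) * t)))"
    using assms by (simp add: W_def)
  also have "\<dots> = exp t / (sinh (p * t) / (p * sinh t) * (sinh ((1 - p) * t) / ((1 - p) * sinh t)))"
  proof -
    have alg: "p * (1 - p) * (2 * (a * b) * S)\<^sup>2 / ((2 * a * A) * (2 * b * B))
        = a * b / (A / (p * S) * (B / ((1 - p) * S)))"
      if "a \<noteq> 0" "b \<noteq> 0" "S \<noteq> 0" "A \<noteq> 0" "B \<noteq> 0" for a b S A B :: real
      using that assms by (simp add: field_simps power2_eq_square)
    have "exp (p * t) * exp ((1 - p) * t) = exp t"
      by (simp add: algebra_simps flip: exp_add)
    then show ?thesis
      using alg[of "exp (p * t)" "exp ((1 - p) * t)" "sinh t" "sinh (p * t)" "sinh ((1 - p) * t)"] assms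
      by simp
  qed
  finally show ?thesis
    by (simp add: x_def sinh_ratio_def)
qed

lemma W_one_exp_double:
  assumes "t \<noteq> 0"
  shows "W 1 (exp (2 * t)) = exp t * (sinh t / t)"
  using assms by (simp add: W_def exp_double_minus_one)

lemma K_powr_mult_W_exp_double:
  assumes "t \<noteq> 0" "p \<noteq> 0" "p \<noteq> 1"
  shows "K (exp (2 * t)) powr (- p * (1 - p)) * W p (exp (2 * t))
       = Ghat p (exp (2 * t)) * (cosh t powr (2 * (1 - p) * ((1 - p) - 1)) / sinh_ratio (1 - p) t)"
proof -
  have "K (exp (2 * t)) = cosh t powr 2"
    by (simp add: K_exp_double)
  then have "K (exp (2 * t)) powr (- p * (1 - p)) = cosh t powr (2 * (- p * (1 - p)))"
    by (simp only: powr_powr)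
  also have "\<dots> = cosh t powr (2 * (1 - p) * ((1 - p) - 1))"
    by (simp add: algebra_simps)
  finally show ?thesis
    using assms by (simp add: Ghat_exp_double W_exp_double)
qed

lemma concave_on_ln_sinh_ratio:
  assumes "s > 0"
  shows "concave_on {1/2..} (\<lambda>q. ln (sinh_ratio q s) - 2 * q * (q - 1) * ln (cosh s))"
proof (rule f''_le0_imp_concave[where
      f' = "\<lambda>q. s * cosh (q * s) / sinh (q * s) - 1 / q - (4 * q - 2) * ln (cosh s)" and
      f'' = "\<lambda>q. 1 / q\<^sup>2 - s\<^sup>2 / (sinh (q * s))\<^sup>2 - 4 * ln (cosh s)"])
  fix q :: real
  assume "q \<in> {1/2..}"
  then have q: "q \<ge> 1/2" and sinh_pos: "sinh (q * s) > 0" "sinh s > 0"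
    using assms by auto
  show "((\<lambda>q. ln (sinh_ratio q s) - 2 * q * (q - 1) * ln (cosh s)) has_real_derivative
      s * cosh (q * s) / sinh (q * s) - 1 / q - (4 * q - 2) * ln (cosh s)) (at q)"
    unfolding sinh_ratio_def using q sinh_pos
    by (auto intro!: derivative_eq_intros simp: field_simps power2_eq_square)
  show "((\<lambda>q. s * cosh (q * s) / sinh (q * s) - 1 / q - (4 * q - 2) * ln (cosh s)) has_real_derivative
      1 / q\<^sup>2 - s\<^sup>2 / (sinh (q * s))\<^sup>2 - 4 * ln (cosh s)) (at q)"
    using q sinh_pos
    by (auto intro!: derivative_eq_intros simp: field_simps power2_eq_square cosh_square_eq[unfolded power2_eq_square])
  \<comment> \<open>The first two terms are bounded both by \<open>4\<close> and by \<open>s\<^sup>2\<close>, while \<open>4 * ln (cosh s) \<ge> min (s\<^sup>2) 4\<close>.\<close>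
  have "1 / q\<^sup>2 \<le> 4"
    using q power_mono[OF q, of 2] by (simp add: field_simps)
  moreover have "1 / q\<^sup>2 - s\<^sup>2 / (sinh (q * s))\<^sup>2 = s\<^sup>2 * (1 / (q * s)\<^sup>2 - 1 / (sinh (q * s))\<^sup>2)"
    using assms q by (simp add: field_simps power2_eq_square)
  moreover have "s\<^sup>2 * (1 / (q * s)\<^sup>2 - 1 / (sinh (q * s))\<^sup>2) \<le> s\<^sup>2"
    using inverse_sq_minus_inverse_sinh_sq_le_one[of "q * s"] assms q
    by (intro mult_left_le) auto
  moreover have "0 \<le> s\<^sup>2 / (sinh (q * s))\<^sup>2" by simp
  ultimately show "1 / q\<^sup>2 - s\<^sup>2 / (sinh (q * s))\<^sup>2 - 4 * ln (cosh s) \<le> 0"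
    using min_sq_le_four_ln_cosh[of s] by linarith
qed (simp add: convex_real_interval)

lemma ln_sinh_ratio_minus_ln_cosh_sign:
  assumes "s > 0"
  defines "G \<equiv> \<lambda>q. ln (sinh_ratio q s) - 2 * q * (q - 1) * ln (cosh s)"
  shows "1/2 \<le> q \<Longrightarrow> q \<le> 1 \<Longrightarrow> 0 \<le> G q"
    and "1 \<le> q \<Longrightarrow> G q \<le> 0"
proof -
  have concave: "concave_on {1/2..} G"
    unfolding G_def by (rule concave_on_ln_sinh_ratio[OF assms(1)])
  have "ln ((cosh (s/2))\<^sup>2) \<le> ln (cosh s)"
    using cosh_half_sq_le[of s] by simp
  then have "2 * ln (cosh (s/2)) \<le> ln (cosh s)"
    by (simp add: ln_realpow)
  then have half: "0 \<le> G (1/2)"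
    using assms(1) by (simp add: G_def sinh_ratio_half ln_div)
  have one: "G 1 = 0"
    using assms(1) by (simp add: G_def)
  show "1/2 \<le> q \<Longrightarrow> q \<le> 1 \<Longrightarrow> 0 \<le> G q"
    using concave_on_nonneg_between[OF concave, of "1/2" 1 q] half one by simp
  show "1 \<le> q \<Longrightarrow> G q \<le> 0"
    using concave_on_nonpos_beyond[OF concave, of "1/2" q 1] half one by simp
qed

lemma cosh_powr_le_sinh_ratio:
  assumes "t \<noteq> 0" "1/2 \<le> q" "q \<le> 1"
  shows "cosh t powr (2 * q * (q - 1)) \<le> sinh_ratio q t"
proof -
  have "ln (cosh t powr (2 * q * (q - 1))) \<le> ln (sinh_ratio q t)"
    using ln_sinh_ratio_minus_ln_cosh_sign(1)[of "\<bar>t\<bar>" q] assms by simp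
  then show ?thesis
    using sinh_ratio_pos[of q t] assms by (simp del: ln_powr)
qed

lemma sinh_ratio_le_cosh_powr:
  assumes "t \<noteq> 0" "1 \<le> q"
  shows "sinh_ratio q t \<le> cosh t powr (2 * q * (q - 1))"
proof -
  have "ln (sinh_ratio q t) \<le> ln (cosh t powr (2 * q * (q - 1)))"
    using ln_sinh_ratio_minus_ln_cosh_sign(2)[of "\<bar>t\<bar>" q] assms by simp
  then show ?thesis
    using sinh_ratio_pos[of q t] assms by (simp del: ln_powr)
qed

lemma sinh_ratio_le_one:
  assumes "t \<noteq> 0" "0 < r" "r \<le> 1"
  shows "sinh_ratio r t \<le> 1"
proof -
  have "sinh (r * \<bar>t\<bar>) \<le> r * sinh \<bar>t\<bar>"
    using sinh_mult_le[of r "\<bar>t\<bar>"] assms by simp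
  then have "sinh_ratio r \<bar>t\<bar> \<le> 1"
    using assms by (simp add: sinh_ratio_def divide_le_eq_1)
  then show ?thesis by simp
qed

lemma sinh_ratio_le_cosh_powr_of_neg:
  assumes "t \<noteq> 0" "q < 0"
  shows "sinh_ratio q t \<le> cosh t powr (2 * q * (q - 1))"
proof -
  define r where "r = - q"
  have r: "0 < r" and q: "q = - r"
    using assms by (simp_all add: r_def)
  have "sinh_ratio r t \<le> cosh t powr (2 * r * (r + 1))"
  proof (cases "r \<le> 1")
    case True
    have "sinh_ratio r t \<le> 1"
      using sinh_ratio_le_one[OF assms(1) r True] .
    also have "1 \<le> cosh t powr (2 * r * (r + 1))"
      using r cosh_real_ge_1[of t] by (intro ge_one_powr_ge_zero) auto
    finally show ?thesis .
  next
    case False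
    have "sinh_ratio r t \<le> cosh t powr (2 * r * (r - 1))"
      using sinh_ratio_le_cosh_powr[OF assms(1)] False by simp
    also have "\<dots> \<le> cosh t powr (2 * r * (r + 1))"
      using r cosh_real_ge_1[of t] by (intro powr_mono) auto
    finally show ?thesis .
  qed
  then show ?thesis
    by (simp add: q algebra_simps)
qed

theorem theorem3p3:
  fixes x p :: real
  assumes "x > 0"
  shows "(0 \<le> p \<and> p \<le> 1/2 \<longrightarrow> Ghat p x \<ge> K x powr (- p * (1 - p)) * W p x)
       \<and> ((p \<le> 0 \<or> p \<ge> 1) \<longrightarrow> Ghat p x \<le> K x powr (- p * (1 - p)) * W p x)"
proof (cases "x = 1")
  case True
  then show ?thesis by (simp add: Ghat_def W_def K_def)
next
  case False
  define t where "t = ln x / 2"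
  have x: "x = exp (2 * t)" and t: "t \<noteq> 0"
    using assms False by (simp_all add: t_def)
  have K_pos: "0 < K x"
    using assms by (simp add: K_def)
  consider "p = 0" | "p = 1" | "p \<noteq> 0" "p \<noteq> 1" by blast
  then show ?thesis
  proof cases
    case 1
    then show ?thesis using K_pos by (simp add: Ghat_def W_def)
  next
    case 2
    then show ?thesis
      using K_pos mult_left_mono[OF one_le_sinh_div_self[OF t], of "exp t"] t
      by (simp add: x Ghat_exp_double W_one_exp_double)
  next
    case 3
    let ?C = "cosh t powr (2 * (1 - p) * ((1 - p) - 1))" and ?B = "sinh_ratio (1 - p) t"
    have rhs: "K x powr (- p * (1 - p)) * W p x = Ghat p x * (?C / ?B)"
      unfolding x by (rule K_powr_mult_W_exp_double[OF t 3])
    have pos: "0 < Ghat p x" "0 < ?B"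
      using 3 t sinh_ratio_pos[of p t] sinh_ratio_pos[of "1 - p" t] by (simp_all add: x Ghat_exp_double)
    have "0 \<le> p \<and> p \<le> 1/2 \<Longrightarrow> ?C \<le> ?B"
      using cosh_powr_le_sinh_ratio[OF t, of "1 - p"] by simp
    moreover have "p \<le> 0 \<or> 1 \<le> p \<Longrightarrow> ?B \<le> ?C"
      using sinh_ratio_le_cosh_powr[OF t, of "1 - p"] sinh_ratio_le_cosh_powr_of_neg[OF t, of "1 - p"] 3
      by force
    moreover have "G * (C / B) \<le> G \<longleftrightarrow> C \<le> B" "G \<le> G * (C / B) \<longleftrightarrow> B \<le> C"
      if "0 < G" "0 < B" for G B C :: real
      using that by (simp_all add: divide_le_eq le_divide_eq)
    ultimately show ?thesis
      unfolding rhs using pos by blast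
  qed
qed

end
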